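(* Let $1<p\le\infty$. Every symmetric space $X$ on $[0,1]$ with property $(D_p)$ has property $(UD_p)$.
   Context: A symmetric (rearrangement invariant) space $X$ on $[0,1]$ is a Banach space of (classes of) Lebesgue measurable functions on $[0,1]$ with the ideal property ($|x|\le|y|$ a.e., $y\in X$ imply $x\in X$, $\|x\|_X\le\|y\|_X$) such that if $y\in X$ and $x^*=y^*$ (non-increasing rearrangements) then $x\in X$ and $\|x\|_X=\|y\|_X$. For $1<p\le\infty$ ($\ell_\infty$ meaning $c_0$), $X$ has property $(D_p)$ if every sequence $(x_n)$ of pairwise disjointly supported elements with $\|x_n\|_X\le1$ has a subsequence $(x_{n_k})$ and a constant $C>0$ with $\|\sum_kc_kx_{n_k}\|_X\le C\|(c_k)\|_{\ell_p}$ for all $(c_k)\in\ell_p$; $X$ has property $(UD_p)$ if the constant $C$ can be chosen the same for all such sequences. *)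

theory Defs
  imports "HOL-Analysis.Analysis"
begin

abbreviation I01 :: "real measure" where
  "I01 \<equiv> lebesgue_on {0..1}"

definition distr_fun :: "(real \<Rightarrow> real) \<Rightarrow> real \<Rightarrow> real" where
  "distr_fun f s = measure I01 {t \<in> {0..1}. s < \<bar>f t\<bar>}"

definition rearr :: "(real \<Rightarrow> real) \<Rightarrow> real \<Rightarrow> ereal" where
  "rearr f t = Inf {ereal s | s. 0 \<le> s \<and> distr_fun f s \<le> t}"

text \<open>A (real) symmetric space on [0,1]: a set Xs of measurable functions with a
  norm N (functions equal a.e. identified via the ideal property), complete,
  with the ideal property and rearrangement invariance.\<close>
definition symmetric_space :: "(real \<Rightarrow> real) set \<Rightarrow> ((real \<Rightarrow> real) \<Rightarrow> real) \<Rightarrow> bool" where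
  "symmetric_space Xs N \<longleftrightarrow>
     Xs \<subseteq> borel_measurable I01 \<and>
     (\<lambda>t. 0) \<in> Xs \<and>
     (\<forall>f\<in>Xs. \<forall>g\<in>Xs. (\<lambda>t. f t + g t) \<in> Xs) \<and>
     (\<forall>f\<in>Xs. \<forall>c::real. (\<lambda>t. c * f t) \<in> Xs) \<and>
     (\<forall>f\<in>Xs. 0 \<le> N f) \<and>
     (\<forall>f\<in>Xs. \<forall>c::real. N (\<lambda>t. c * f t) = \<bar>c\<bar> * N f) \<and>
     (\<forall>f\<in>Xs. \<forall>g\<in>Xs. N (\<lambda>t. f t + g t) \<le> N f + N g) \<and>
     (\<forall>f\<in>Xs. N f = 0 \<longleftrightarrow> (AE t in I01. f t = 0)) \<and>
     (\<forall>x::nat \<Rightarrow> real \<Rightarrow> real. (\<forall>n. x n \<in> Xs) \<and>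
        (\<forall>e>0. \<exists>K. \<forall>m\<ge>K. \<forall>n\<ge>K. N (\<lambda>t. x m t - x n t) < e) \<longrightarrow>
        (\<exists>f\<in>Xs. (\<lambda>n. N (\<lambda>t. x n t - f t)) \<longlonglongrightarrow> 0)) \<and>
     (\<forall>f g. g \<in> Xs \<and> f \<in> borel_measurable I01 \<and> (AE t in I01. \<bar>f t\<bar> \<le> \<bar>g t\<bar>)
        \<longrightarrow> f \<in> Xs \<and> N f \<le> N g) \<and>
     (\<forall>f g. g \<in> Xs \<and> f \<in> borel_measurable I01 \<and> (\<forall>t\<in>{0..1}. rearr f t = rearr g t)
        \<longrightarrow> f \<in> Xs \<and> N f = N g)"

definition lp_fin :: "ereal \<Rightarrow> (nat \<Rightarrow> real) \<Rightarrow> nat \<Rightarrow> real" where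
  "lp_fin p c m =
     (if p = \<infinity> then Max (insert 0 ((\<lambda>k. \<bar>c k\<bar>) ` {..<m}))
      else (\<Sum>k<m. \<bar>c k\<bar> powr real_of_ereal p) powr (1 / real_of_ereal p))"

definition disjoint_seq :: "(nat \<Rightarrow> real \<Rightarrow> real) \<Rightarrow> bool" where
  "disjoint_seq x \<longleftrightarrow> (\<forall>n m. n \<noteq> m \<longrightarrow> (AE t in I01. x n t = 0 \<or> x m t = 0))"

definition upper_est :: "((real \<Rightarrow> real) \<Rightarrow> real) \<Rightarrow> ereal \<Rightarrow> real \<Rightarrow> (nat \<Rightarrow> real \<Rightarrow> real) \<Rightarrow> bool" where
  "upper_est N p C y \<longleftrightarrow>
     (\<forall>m c. N (\<lambda>t. \<Sum>k<m. c k * y k t) \<le> C * lp_fin p c m)"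

definition has_Dp :: "(real \<Rightarrow> real) set \<Rightarrow> ((real \<Rightarrow> real) \<Rightarrow> real) \<Rightarrow> ereal \<Rightarrow> bool" where
  "has_Dp Xs N p \<longleftrightarrow>
     (\<forall>x. (\<forall>n. x n \<in> Xs \<and> N (x n) \<le> 1) \<and> disjoint_seq x \<longrightarrow>
        (\<exists>r C. strict_mono r \<and> C > 0 \<and> upper_est N p C (\<lambda>k. x (r k))))"

definition has_UDp :: "(real \<Rightarrow> real) set \<Rightarrow> ((real \<Rightarrow> real) \<Rightarrow> real) \<Rightarrow> ereal \<Rightarrow> bool" where
  "has_UDp Xs N p \<longleftrightarrow>
     (\<exists>C>0. \<forall>x. (\<forall>n. x n \<in> Xs \<and> N (x n) \<le> 1) \<and> disjoint_seq x \<longrightarrow>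
        (\<exists>r. strict_mono r \<and> upper_est N p C (\<lambda>k. x (r k))))"

end

theory Submission
  imports Defs
begin

text \<open>Suppose \<open>(UD_p)\<close> fails. Then for every \<open>j\<close> there is a normalized disjoint sequence
  \<open>x_j\<close> none of whose subsequences has an upper \<open>l_p\<close>-estimate with constant \<open>(j+1) 2^(j+1)\<close>.
  After passing to subsequences, each \<open>x_j(k)\<close> can be replaced by an equimeasurable copy
  \<open>W j k\<close> supported in its own dyadic interval; then \<open>Y_k = \<Sum>i\<le>k. 2^-(i+1) W i k\<close> is
  again a normalized disjoint sequence. By \<open>(D_p)\<close> some subsequence of \<open>Y\<close> has an upper
  estimate with a constant \<open>C\<close>. For \<open>j \<ge> C\<close>, restricting to the supports of row \<open>j\<close>
  (ideal property) and undoing the relocation (rearrangement invariance) yields an upper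
  estimate with constant \<open>2^(j+1) C\<close> for a subsequence of \<open>x_j\<close>, a contradiction.\<close>

interpretation I01: finite_measure I01
  by (rule finite_measure_lebesgue_on) auto

lemma distr_fun_sets:
  fixes f :: "real \<Rightarrow> real"
  assumes "f \<in> borel_measurable I01"
  shows "{t \<in> {0..1}. s < \<bar>f t\<bar>} \<in> sets I01"
proof -
  have "(\<lambda>t. \<bar>f t\<bar>) \<in> borel_measurable I01" using assms by measurable
  then have "{t \<in> space I01. s < \<bar>f t\<bar>} \<in> sets I01"
    unfolding borel_measurable_iff_greater by blast
  then show ?thesis by simp
qed

lemma distr_fun_nonneg: "0 \<le> distr_fun f s"
  by (simp add: distr_fun_def)

lemma distr_fun_le_1: "distr_fun f s \<le> 1"
proof -
  have "distr_fun f s \<le> measure I01 {0..1}"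
    unfolding distr_fun_def by (rule I01.finite_measure_mono) auto
  then show ?thesis by (simp add: measure_restrict_space)
qed

lemma distr_fun_antimono:
  assumes "f \<in> borel_measurable I01" "s \<le> s'"
  shows "distr_fun f s' \<le> distr_fun f s"
  unfolding distr_fun_def
  by (rule I01.finite_measure_mono) (use assms distr_fun_sets in auto)

lemma distr_fun_add_disjoint:
  fixes f g :: "real \<Rightarrow> real"
  assumes f: "f \<in> borel_measurable I01" and g: "g \<in> borel_measurable I01"
    and disj: "AE t in I01. f t = 0 \<or> g t = 0" and "0 \<le> s"
  shows "distr_fun (\<lambda>t. f t + g t) s = distr_fun f s + distr_fun g s"
proof -
  let ?A = "{t \<in> {0..1}. s < \<bar>f t\<bar>}" and ?B = "{t \<in> {0..1}. s < \<bar>g t\<bar>}"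
  have "(\<lambda>t. f t + g t) \<in> borel_measurable I01" using f g by measurable
  then have "distr_fun (\<lambda>t. f t + g t) s = measure I01 (?A \<union> ?B)"
    unfolding distr_fun_def
    by (intro measure_eq_AE sets.Un distr_fun_sets f g, use disj in eventually_elim) auto
  also have "\<dots> = measure I01 ?A + measure I01 ?B"
  proof (rule measure_Un_AE)
    show "AE t in I01. t \<notin> ?A \<or> t \<notin> ?B"
      using disj by eventually_elim (use \<open>0 \<le> s\<close> in auto)
  qed (use distr_fun_sets[OF f] distr_fun_sets[OF g] in \<open>simp_all add: I01.fmeasurable_eq_sets\<close>)
  finally show ?thesis unfolding distr_fun_def .
qed

lemma distr_fun_sum_disjoint:
  fixes f :: "nat \<Rightarrow> real \<Rightarrow> real"
  assumes "\<And>k. k < m \<Longrightarrow> f k \<in> borel_measurable I01"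
    and "\<And>k l. k < m \<Longrightarrow> l < m \<Longrightarrow> k \<noteq> l \<Longrightarrow> AE t in I01. f k t = 0 \<or> f l t = 0"
    and "0 \<le> s"
  shows "distr_fun (\<lambda>t. \<Sum>k<m. f k t) s = (\<Sum>k<m. distr_fun (f k) s)"
  using assms(1,2)
proof (induction m)
  case 0
  then show ?case using \<open>0 \<le> s\<close> by (simp add: distr_fun_def not_less)
next
  case (Suc m)
  have "AE t in I01. \<forall>k\<in>{..<m}. f k t = 0 \<or> f m t = 0"
    using Suc.prems(2) by (intro AE_finite_allI) auto
  then have "AE t in I01. (\<Sum>k<m. f k t) = 0 \<or> f m t = 0"
    by eventually_elim auto
  then have "distr_fun (\<lambda>t. (\<Sum>k<m. f k t) + f m t) s
      = distr_fun (\<lambda>t. \<Sum>k<m. f k t) s + distr_fun (f m) s"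
    using Suc.prems(1) \<open>0 \<le> s\<close> by (intro distr_fun_add_disjoint borel_measurable_sum) auto
  then show ?case using Suc by simp
qed

lemma distr_fun_scale:
  assumes "0 \<le> s" "c \<noteq> 0"
  shows "distr_fun (\<lambda>t. c * f t) s = distr_fun f (s / \<bar>c\<bar>)"
proof -
  have "{t \<in> {0..1}. s < \<bar>c * f t\<bar>} = {t \<in> {0..1}. s / \<bar>c\<bar> < \<bar>f t\<bar>}"
    using assms by (auto simp: abs_mult divide_less_eq mult.commute)
  then show ?thesis by (simp add: distr_fun_def)
qed

lemma distr_fun_sum_disjoint_eq:
  fixes f g :: "nat \<Rightarrow> real \<Rightarrow> real"
  assumes "\<And>k. f k \<in> borel_measurable I01" "\<And>k. g k \<in> borel_measurable I01"
    and "disjoint_seq f" "disjoint_seq g"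
    and eq: "\<And>k s. 0 \<le> s \<Longrightarrow> distr_fun (f k) s = distr_fun (g k) s"
    and "0 \<le> s"
  shows "distr_fun (\<lambda>t. \<Sum>k<m. c k * f k t) s = distr_fun (\<lambda>t. \<Sum>k<m. c k * g k t) s"
proof -
  have sum: "distr_fun (\<lambda>t. \<Sum>k<m. c k * h k t) s = (\<Sum>k<m. distr_fun (\<lambda>t. c k * h k t) s)"
    if "\<And>k. h k \<in> borel_measurable I01" "disjoint_seq h" for h :: "nat \<Rightarrow> real \<Rightarrow> real"
  proof (rule distr_fun_sum_disjoint[OF _ _ \<open>0 \<le> s\<close>])
    fix k l :: nat assume "k \<noteq> l"
    with \<open>disjoint_seq h\<close> have "AE t in I01. h k t = 0 \<or> h l t = 0"
      unfolding disjoint_seq_def by blast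
    then show "AE t in I01. c k * h k t = 0 \<or> c l * h l t = 0"
      by eventually_elim auto
  qed (use that in auto)
  have "distr_fun (\<lambda>t. c k * f k t) s = distr_fun (\<lambda>t. c k * g k t) s" for k :: nat
  proof (cases "c k = 0")
    case False
    then show ?thesis using eq \<open>0 \<le> s\<close> by (simp add: distr_fun_scale)
  qed (use \<open>0 \<le> s\<close> in \<open>simp add: distr_fun_def not_less\<close>)
  then show ?thesis using sum[of f] sum[of g] assms by simp
qed

lemma distr_fun_tendsto_right:
  assumes f: "f \<in> borel_measurable I01"
  shows "(\<lambda>n. distr_fun f (s + 1 / Suc n)) \<longlonglongrightarrow> distr_fun f s"
proof -
  define A where "A n = {t \<in> {0..1}. s + 1 / Suc n < \<bar>f t\<bar>}" for n
  have "incseq A"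
  proof (rule incseq_SucI)
    fix n
    have "1 / real (Suc (Suc n)) \<le> 1 / Suc n" by (simp add: frac_le)
    then show "A n \<subseteq> A (Suc n)" by (auto simp: A_def)
  qed
  moreover have "(\<Union>n. A n) = {t \<in> {0..1}. s < \<bar>f t\<bar>}"
  proof (intro equalityI subsetI)
    fix t assume "t \<in> (\<Union>n. A n)"
    then show "t \<in> {t \<in> {0..1}. s < \<bar>f t\<bar>}"
      by (auto simp: A_def) (smt (verit) of_nat_0_le_iff divide_nonneg_nonneg)
  next
    fix t assume t: "t \<in> {t \<in> {0..1}. s < \<bar>f t\<bar>}"
    then obtain n where "1 / Suc n < \<bar>f t\<bar> - s"
      using nat_approx_posE[of "\<bar>f t\<bar> - s"] by auto
    with t have "t \<in> A n" by (auto simp: A_def)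
    then show "t \<in> (\<Union>n. A n)" by blast
  qed
  ultimately show ?thesis
    using I01.finite_Lim_measure_incseq[of A] distr_fun_sets[OF f]
    by (auto simp: A_def distr_fun_def)
qed

lemma distr_fun_tendsto_0:
  assumes f: "f \<in> borel_measurable I01"
  shows "(\<lambda>n. distr_fun f (real n)) \<longlonglongrightarrow> 0"
proof -
  define B where "B n = {t \<in> {0..1}. real n < \<bar>f t\<bar>}" for n
  have "decseq B" by (rule decseq_SucI) (auto simp: B_def)
  moreover have "(\<Inter>n. B n) = {}"
  proof (intro equals0I)
    fix t assume "t \<in> (\<Inter>n. B n)"
    moreover obtain n where "\<bar>f t\<bar> < real n" using reals_Archimedean2 by blast
    ultimately show False by (auto simp: B_def dest: spec[of _ n])
  qed
  ultimately show ?thesis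
    using I01.finite_Lim_measure_decseq[of B] distr_fun_sets[OF f]
    by (auto simp: B_def distr_fun_def)
qed

text \<open>A real-valued version of \<open>rearr\<close>. The set is guaranteed to be nonempty only for
  \<open>u > 0\<close> (otherwise the \<open>Inf\<close> may be a junk value), so it is only used there.\<close>
definition decr_rearr :: "(real \<Rightarrow> real) \<Rightarrow> real \<Rightarrow> real" where
  "decr_rearr f u = Inf {s. 0 \<le> s \<and> distr_fun f s \<le> u}"

lemma decr_rearr_nonneg_and_less_iff:
  assumes f: "f \<in> borel_measurable I01" and "0 < u"
  shows decr_rearr_nonneg: "0 \<le> decr_rearr f u"
    and less_decr_rearr_iff: "0 \<le> s \<Longrightarrow> s < decr_rearr f u \<longleftrightarrow> u < distr_fun f s"
proof -
  define S where "S = {s. 0 \<le> s \<and> distr_fun f s \<le> u}"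
  obtain n where "distr_fun f (real n) < u"
    using distr_fun_tendsto_0[OF f] \<open>0 < u\<close> by (metis order_tendstoD(2) eventually_sequentially order_refl)
  then have "real n \<in> S" by (simp add: S_def)
  then have ne: "S \<noteq> {}" by blast
  have bdd: "bdd_below S" by (auto simp: S_def bdd_below_def)
  show "0 \<le> decr_rearr f u"
    unfolding decr_rearr_def S_def[symmetric] by (rule cInf_greatest[OF ne]) (auto simp: S_def)
  \<comment> \<open>the infimum is attained, by right-continuity of \<open>distr_fun f\<close>\<close>
  have "distr_fun f (Inf S) \<le> u"
  proof (rule LIMSEQ_le_const2[OF distr_fun_tendsto_right[OF f]], intro exI allI impI)
    fix n
    obtain s where s: "s \<in> S" "s < Inf S + 1 / Suc n"
      using cInf_lessD[OF ne, of "Inf S + 1 / Suc n"] by auto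
    then have "distr_fun f (Inf S + 1 / Suc n) \<le> distr_fun f s"
      by (intro distr_fun_antimono[OF f]) simp
    with s show "distr_fun f (Inf S + 1 / Suc n) \<le> u" by (simp add: S_def)
  qed
  moreover assume "0 \<le> s"
  ultimately show "s < decr_rearr f u \<longleftrightarrow> u < distr_fun f s"
    using cInf_lower[OF _ bdd, of s] distr_fun_antimono[OF f, of "Inf S" s]
    unfolding decr_rearr_def S_def[symmetric] by (force simp: S_def)
qed

definition shifted_rearr :: "(real \<Rightarrow> real) \<Rightarrow> real \<Rightarrow> real \<Rightarrow> real" where
  "shifted_rearr f a t = (if a < t then decr_rearr f (t - a) else 0)"

lemma shifted_rearr_nonneg:
  assumes "f \<in> borel_measurable I01"
  shows "0 \<le> shifted_rearr f a t"
  using decr_rearr_nonneg[OF assms] by (simp add: shifted_rearr_def)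

lemma shifted_rearr_level_set:
  assumes f: "f \<in> borel_measurable I01" and "0 \<le> s"
  shows "{t. s < \<bar>shifted_rearr f a t\<bar>} = {a<..<a + distr_fun f s}"
proof -
  have "s < \<bar>shifted_rearr f a t\<bar> \<longleftrightarrow> a < t \<and> t - a < distr_fun f s" for t
  proof (cases "a < t")
    case True
    then have "0 < t - a" by simp
    then have "\<bar>shifted_rearr f a t\<bar> = decr_rearr f (t - a)"
      using True decr_rearr_nonneg[OF f] by (simp add: shifted_rearr_def)
    then show ?thesis using less_decr_rearr_iff[OF f \<open>0 < t - a\<close> \<open>0 \<le> s\<close>] True by simp
  next
    case False
    then have "shifted_rearr f a t = 0" by (simp add: shifted_rearr_def)
    then show ?thesis using False \<open>0 \<le> s\<close> by simp
  qed
  then have "{t. s < \<bar>shifted_rearr f a t\<bar>} = {t. a < t \<and> t - a < distr_fun f s}"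
    by simp
  also have "\<dots> = {a<..<a + distr_fun f s}" by auto
  finally show ?thesis .
qed

lemma shifted_rearr_support:
  assumes "f \<in> borel_measurable I01" "shifted_rearr f a t \<noteq> 0"
  shows "t \<in> {a<..<a + distr_fun f 0}"
proof -
  have "t \<in> {t. 0 < \<bar>shifted_rearr f a t\<bar>}" using assms(2) by simp
  then show ?thesis unfolding shifted_rearr_level_set[OF assms(1) order_refl] .
qed

lemma shifted_rearr_measurable:
  assumes f: "f \<in> borel_measurable I01"
  shows "shifted_rearr f a \<in> borel_measurable I01"
  unfolding borel_measurable_iff_greater
proof
  fix s :: real
  show "{t \<in> space I01. s < shifted_rearr f a t} \<in> sets I01"
  proof (cases "0 \<le> s")
    case True
    have "{t \<in> space I01. s < shifted_rearr f a t} = id -` {a<..<a + distr_fun f s} \<inter> space I01"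
      using shifted_rearr_level_set[OF f True] shifted_rearr_nonneg[OF f] by (auto simp: set_eq_iff)
    also have "\<dots> \<in> sets I01"
      by (rule measurable_sets[OF id_borel_measurable_lebesgue_on]) simp
    finally show ?thesis .
  next
    case False
    then have "{t \<in> space I01. s < shifted_rearr f a t} = space I01"
      using shifted_rearr_nonneg[OF f, of a] by (auto simp: not_le less_le_trans)
    then show ?thesis by simp
  qed
qed

lemma distr_fun_shifted_rearr:
  assumes f: "f \<in> borel_measurable I01" and "0 \<le> a" "a + distr_fun f 0 \<le> 1" "0 \<le> s"
  shows "distr_fun (shifted_rearr f a) s = distr_fun f s"
proof -
  have le: "0 \<le> distr_fun f s" "distr_fun f s \<le> distr_fun f 0"
    using distr_fun_nonneg distr_fun_antimono[OF f \<open>0 \<le> s\<close>] .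
  have "{t \<in> {0..1}. s < \<bar>shifted_rearr f a t\<bar>} = {0..1} \<inter> {a<..<a + distr_fun f s}"
    using shifted_rearr_level_set[OF f \<open>0 \<le> s\<close>] by blast
  also have "\<dots> = {a<..<a + distr_fun f s}" using le assms by auto
  finally have "distr_fun (shifted_rearr f a) s = measure I01 {a<..<a + distr_fun f s}"
    by (simp add: distr_fun_def)
  also have "\<dots> = measure lebesgue {a<..<a + distr_fun f s}"
    by (rule measure_restrict_space) (use le assms in auto)
  also have "\<dots> = distr_fun f s" using le by simp
  finally show ?thesis .
qed

lemma disjoint_seq_distr_fun_tendsto_0:
  assumes meas: "\<And>n. x n \<in> borel_measurable I01" and "disjoint_seq x"
  shows "(\<lambda>n. distr_fun (x n) 0) \<longlonglongrightarrow> 0"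
proof -
  have "(\<Sum>n<M. distr_fun (x n) 0) = distr_fun (\<lambda>t. \<Sum>n<M. x n t) 0" for M
    by (rule distr_fun_sum_disjoint[symmetric]) (use assms in \<open>auto simp: disjoint_seq_def\<close>)
  then have "summable (\<lambda>n. distr_fun (x n) 0)"
    by (intro summableI_nonneg_bounded[where x=1]) (auto simp: distr_fun_nonneg distr_fun_le_1)
  then show ?thesis by (rule summable_LIMSEQ_zero)
qed

lemma LIMSEQ_0_subseq_le:
  fixes f e :: "nat \<Rightarrow> real"
  assumes "f \<longlonglongrightarrow> 0" and "\<And>k. 0 < e k"
  obtains \<sigma> where "strict_mono \<sigma>" "\<And>k. f (\<sigma> k) \<le> e k"
proof -
  have "\<forall>k. \<exists>M. \<forall>n\<ge>M. \<bar>f n\<bar> < e k"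
    using assms unfolding LIMSEQ_iff by simp
  then obtain M where M: "\<And>k n. M k \<le> n \<Longrightarrow> \<bar>f n\<bar> < e k" by metis
  define \<sigma> where "\<sigma> k = k + (\<Sum>i\<le>k. M i)" for k
  have "strict_mono \<sigma>" by (rule strict_monoI_Suc) (simp add: \<sigma>_def)
  moreover have "f (\<sigma> k) \<le> e k" for k
  proof -
    have "M k \<le> \<sigma> k" using member_le_sum[of k "{..k}" M] by (simp add: \<sigma>_def)
    then have "\<bar>f (\<sigma> k)\<bar> < e k" by (rule M)
    then show ?thesis by linarith
  qed
  ultimately show ?thesis using that by blast
qed

definition dyadic_interval :: "nat \<Rightarrow> real set" where
  "dyadic_interval n = {(1/2)^(n+1) <..< (1/2)^n}"

lemma dyadic_interval_disjoint:
  assumes "m \<noteq> n"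
  shows "dyadic_interval m \<inter> dyadic_interval n = {}"
proof -
  have "dyadic_interval m \<inter> dyadic_interval n = {}" if "m < n" for m n
  proof -
    have "(1/2::real)^n \<le> (1/2)^(m+1)" by (rule power_decreasing) (use that in auto)
    then show ?thesis by (auto simp: dyadic_interval_def)
  qed
  then show ?thesis using assms by (metis inf_commute nat_neq_iff)
qed

text \<open>Entry \<open>(j, k)\<close> is moved onto the dyadic interval with index \<open>prod_encode (j, k)\<close>.
  It fits there once its support is no longer than the interval, which holds after passing
  to a subsequence of each row, because the supports of a disjoint sequence have measures
  tending to \<open>0\<close>.\<close>
lemma relocate_disjointly:
  fixes X :: "nat \<Rightarrow> nat \<Rightarrow> real \<Rightarrow> real"
  assumes meas: "\<And>j n. X j n \<in> borel_measurable I01" and disj: "\<And>j. disjoint_seq (X j)"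
  obtains \<sigma> :: "nat \<Rightarrow> nat \<Rightarrow> nat" and W :: "nat \<Rightarrow> nat \<Rightarrow> real \<Rightarrow> real"
    and S :: "nat \<Rightarrow> nat \<Rightarrow> real set"
  where "\<And>j. strict_mono (\<sigma> j)" "\<And>j k. W j k \<in> borel_measurable I01"
    "\<And>j k s. 0 \<le> s \<Longrightarrow> distr_fun (W j k) s = distr_fun (X j (\<sigma> j k)) s"
    "\<And>j k t. W j k t \<noteq> 0 \<Longrightarrow> t \<in> S j k"
    "\<And>j k j' k'. (j, k) \<noteq> (j', k') \<Longrightarrow> S j k \<inter> S j' k' = {}"
proof -
  define len :: "nat \<Rightarrow> nat \<Rightarrow> real" where "len j k = (1/2)^(prod_encode (j, k) + 1)" for j k
  have "\<exists>\<sigma>. strict_mono \<sigma> \<and> (\<forall>k. distr_fun (X j (\<sigma> k)) 0 \<le> len j k)" for j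
    using LIMSEQ_0_subseq_le[OF disjoint_seq_distr_fun_tendsto_0[OF meas disj], of "len j"]
    by (metis len_def zero_less_divide_1_iff zero_less_numeral zero_less_power)
  then obtain \<sigma> where \<sigma>: "\<And>j. strict_mono (\<sigma> j)"
    and short: "\<And>j k. distr_fun (X j (\<sigma> j k)) 0 \<le> len j k"
    by metis
  define W where "W j k = shifted_rearr (X j (\<sigma> j k)) (len j k)" for j k
  define S where "S j k = dyadic_interval (prod_encode (j, k))" for j k
  have fits: "len j k + len j k = (1/2)^prod_encode (j, k)" for j k by (simp add: len_def)
  show ?thesis
  proof (rule that[of \<sigma> W S])
    show "W j k \<in> borel_measurable I01" for j k
      unfolding W_def by (rule shifted_rearr_measurable[OF meas])
    show "distr_fun (W j k) s = distr_fun (X j (\<sigma> j k)) s" if "0 \<le> s" for j k s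
    proof -
      have "(1/2::real)^prod_encode (j, k) \<le> 1" by (simp add: power_le_one)
      then have "len j k + distr_fun (X j (\<sigma> j k)) 0 \<le> 1" using short[of j k] fits[of j k] by linarith
      then show ?thesis unfolding W_def using that by (intro distr_fun_shifted_rearr meas) (auto simp: len_def)
    qed
    show "t \<in> S j k" if "W j k t \<noteq> 0" for j k t
      using shifted_rearr_support[OF meas that[unfolded W_def]] short[of j k] fits[of j k]
      by (auto simp: S_def dyadic_interval_def len_def)
    show "S j k \<inter> S j' k' = {}" if "(j, k) \<noteq> (j', k')" for j k j' k'
      using that dyadic_interval_disjoint inj_prod_encode[of UNIV]
      by (simp add: S_def inj_on_def)
  qed (fact \<sigma>)
qed

lemma lp_fin_nonneg: "0 \<le> lp_fin p c m"
proof -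
  have "0 \<le> Max (insert 0 ((\<lambda>k. \<bar>c k\<bar>) ` {..<m}))" by (rule Max_ge) auto
  then show ?thesis by (simp add: lp_fin_def)
qed

lemma lessThan_add_split: "{..<m + j} = {..<j} \<union> (\<lambda>k. k + j) ` {..<m::nat}"
proof (intro equalityI subsetI)
  fix x assume "x \<in> {..<m + j}"
  then show "x \<in> {..<j} \<union> (\<lambda>k. k + j) ` {..<m}"
    by (cases "x < j") (auto intro!: image_eqI[of x _ "x - j"])
qed auto

lemma sum_lessThan_shift:
  fixes g :: "nat \<Rightarrow> 'a::comm_monoid_add"
  shows "(\<Sum>k<m + j. if k < j then 0 else g (k - j)) = (\<Sum>k<m. g k)"
  by (induction m) (simp_all add: add.commute)

lemma lp_fin_shift:
  "lp_fin p (\<lambda>k. if k < j then 0 else c (k - j)) (m + j) = lp_fin p c m"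
proof -
  have "insert 0 ((\<lambda>k. \<bar>if k < j then 0 else c (k - j)\<bar>) ` {..<m + j})
      = insert 0 ((\<lambda>k. \<bar>c k\<bar>) ` {..<m})"
    unfolding lessThan_add_split image_Un image_image by auto
  moreover have "(\<Sum>k<m + j. \<bar>if k < j then 0 else c (k - j)\<bar> powr q) = (\<Sum>k<m. \<bar>c k\<bar> powr q)"
    for q
  proof -
    have "(\<Sum>k<m + j. \<bar>if k < j then 0 else c (k - j)\<bar> powr q)
        = (\<Sum>k<m + j. if k < j then 0 else \<bar>c (k - j)\<bar> powr q)"
      by (rule sum.cong) auto
    then show ?thesis using sum_lessThan_shift[where g = "\<lambda>k. \<bar>c k\<bar> powr q"] by simp
  qed
  ultimately show ?thesis by (simp add: lp_fin_def)
qed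

lemma upper_est_mono:
  assumes "upper_est N p C y" "C \<le> C'"
  shows "upper_est N p C' y"
  using assms mult_right_mono[OF \<open>C \<le> C'\<close> lp_fin_nonneg] unfolding upper_est_def
  by (meson order_trans)

lemma upper_est_shift:
  assumes "upper_est N p C y"
  shows "upper_est N p C (\<lambda>k. y (k + j))"
  unfolding upper_est_def
proof (intro allI)
  fix m :: nat and c :: "nat \<Rightarrow> real"
  define c' where "c' k = (if k < j then 0 else c (k - j))" for k
  have "(\<Sum>k<m + j. c' k * y k t) = (\<Sum>k<m + j. if k < j then 0 else c (k - j) * y (k - j + j) t)"
    for t by (rule sum.cong) (simp_all add: c'_def)
  then have "(\<Sum>k<m + j. c' k * y k t) = (\<Sum>k<m. c k * y (k + j) t)" for t
    using sum_lessThan_shift[where g = "\<lambda>k. c k * y (k + j) t"] by simp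
  then have "N (\<lambda>t. \<Sum>k<m. c k * y (k + j) t) = N (\<lambda>t. \<Sum>k<m + j. c' k * y k t)"
    by simp
  also have "\<dots> \<le> C * lp_fin p c' (m + j)"
    using assms by (simp add: upper_est_def)
  also have "\<dots> = C * lp_fin p c m"
    unfolding c'_def lp_fin_shift ..
  finally show "N (\<lambda>t. \<Sum>k<m. c k * y (k + j) t) \<le> C * lp_fin p c m" .
qed

lemma disjoint_seq_strict_mono:
  assumes "disjoint_seq x" "strict_mono r"
  shows "disjoint_seq (\<lambda>k. x (r k))"
  unfolding disjoint_seq_def
proof (intro allI impI)
  fix n m :: nat assume "n \<noteq> m"
  then have "r n \<noteq> r m" using strict_mono_eq[OF assms(2)] by simp
  then show "AE t in I01. x (r n) t = 0 \<or> x (r m) t = 0"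
    using assms(1) by (simp add: disjoint_seq_def)
qed

lemma disjoint_seq_disjoint_supports:
  assumes "\<And>k t. z k t \<noteq> 0 \<Longrightarrow> t \<in> T k" "\<And>k l. k \<noteq> l \<Longrightarrow> T k \<inter> T l = {}"
  shows "disjoint_seq z"
  unfolding disjoint_seq_def
proof (intro allI impI AE_I2)
  fix k l :: nat and t :: real assume "k \<noteq> l"
  then show "z k t = 0 \<or> z l t = 0" using assms by blast
qed

lemma sum_restrict_to_band:
  fixes W :: "nat \<Rightarrow> nat \<Rightarrow> real \<Rightarrow> real"
  assumes supp: "\<And>i k t. W i k t \<noteq> 0 \<Longrightarrow> t \<in> S i k"
    and disj: "\<And>i k i' k'. (i, k) \<noteq> (i', k') \<Longrightarrow> S i k \<inter> S i' k' = {}"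
    and "j \<le> n"
  shows "(\<Sum>i\<le>n. a i * W i n t) * indicator (\<Union>k. S j k) t = a j * W j n t"
proof (cases "t \<in> (\<Union>k. S j k)")
  case True
  then obtain k where "t \<in> S j k" by blast
  then have others: "W i n t = 0" if "i \<noteq> j" for i
    using supp[of i n t] disj[of i n j k] that by blast
  have "(\<Sum>i\<le>n. a i * W i n t) = (\<Sum>i\<in>{j}. a i * W i n t)"
    by (rule sum.mono_neutral_right) (use \<open>j \<le> n\<close> others in auto)
  with True show ?thesis by simp
next
  case False
  then show ?thesis using supp[of j n t] by auto
qed

context
  fixes Xs :: "(real \<Rightarrow> real) set" and N :: "(real \<Rightarrow> real) \<Rightarrow> real"
  assumes X: "symmetric_space Xs N"
begin

lemma symmetric_space_measurable: "f \<in> Xs \<Longrightarrow> f \<in> borel_measurable I01"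
  using X unfolding symmetric_space_def by (elim conjE) (erule subsetD)

lemma symmetric_space_zero: "(\<lambda>t. 0) \<in> Xs"
  using X unfolding symmetric_space_def by (elim conjE) blast

lemma symmetric_space_add: "f \<in> Xs \<Longrightarrow> g \<in> Xs \<Longrightarrow> (\<lambda>t. f t + g t) \<in> Xs"
  using X unfolding symmetric_space_def by (elim conjE) blast

lemma symmetric_space_scale: "f \<in> Xs \<Longrightarrow> (\<lambda>t. c * f t) \<in> Xs"
  using X unfolding symmetric_space_def by (elim conjE) blast

lemma symmetric_space_norm_scale: "f \<in> Xs \<Longrightarrow> N (\<lambda>t. c * f t) = \<bar>c\<bar> * N f"
  using X unfolding symmetric_space_def by (elim conjE) blast

lemma symmetric_space_triangle: "f \<in> Xs \<Longrightarrow> g \<in> Xs \<Longrightarrow> N (\<lambda>t. f t + g t) \<le> N f + N g"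
  using X unfolding symmetric_space_def by (elim conjE) blast

lemma symmetric_space_ideal:
  "g \<in> Xs \<Longrightarrow> f \<in> borel_measurable I01 \<Longrightarrow> (AE t in I01. \<bar>f t\<bar> \<le> \<bar>g t\<bar>)
    \<Longrightarrow> f \<in> Xs \<and> N f \<le> N g"
  using X unfolding symmetric_space_def by (elim conjE) blast

lemma symmetric_space_equimeasurable:
  assumes "g \<in> Xs" "f \<in> borel_measurable I01" "\<And>s. 0 \<le> s \<Longrightarrow> distr_fun f s = distr_fun g s"
  shows "f \<in> Xs \<and> N f = N g"
proof -
  have "{ereal s |s. 0 \<le> s \<and> distr_fun f s \<le> t} = {ereal s |s. 0 \<le> s \<and> distr_fun g s \<le> t}" for t
    using assms(3) by (intro Collect_cong) (metis (no_types, lifting))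
  then have "\<forall>t\<in>{0..1}. rearr f t = rearr g t" by (simp add: rearr_def)
  then show ?thesis using X assms(1,2) unfolding symmetric_space_def by (elim conjE) blast
qed

lemma symmetric_space_sum:
  "(\<And>k. k \<in> F \<Longrightarrow> f k \<in> Xs) \<Longrightarrow> (\<lambda>t. \<Sum>k\<in>F. f k t) \<in> Xs"
  by (induction F rule: infinite_finite_induct)
     (simp_all add: symmetric_space_zero symmetric_space_add)

lemma symmetric_space_norm_sum_le:
  "(\<And>k. k \<in> F \<Longrightarrow> f k \<in> Xs) \<Longrightarrow> N (\<lambda>t. \<Sum>k\<in>F. f k t) \<le> (\<Sum>k\<in>F. N (f k))"
proof (induction F rule: infinite_finite_induct)
  case (infinite F)
  show ?case using symmetric_space_norm_scale[OF symmetric_space_zero, of 0] by (simp add: infinite)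
next
  case empty
  show ?case using symmetric_space_norm_scale[OF symmetric_space_zero, of 0] by simp
next
  case (insert k F)
  then show ?case
    using symmetric_space_triangle[of "f k" "\<lambda>t. \<Sum>k\<in>F. f k t"] symmetric_space_sum[of F f]
    by fastforce
qed

lemma upper_est_equimeasurable:
  assumes "upper_est N p C y"
    and y: "\<And>k. y k \<in> Xs" "disjoint_seq y"
    and z: "\<And>k. z k \<in> borel_measurable I01" "disjoint_seq z"
    and eq: "\<And>k s. 0 \<le> s \<Longrightarrow> distr_fun (z k) s = distr_fun (y k) s"
  shows "upper_est N p C z"
  unfolding upper_est_def
proof (intro allI)
  fix m c
  have "(\<lambda>t. \<Sum>k<m. c k * y k t) \<in> Xs"
    using y by (intro symmetric_space_sum symmetric_space_scale)
  moreover have "(\<lambda>t. \<Sum>k<m. c k * z k t) \<in> borel_measurable I01"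
    using z by measurable
  moreover have "distr_fun (\<lambda>t. \<Sum>k<m. c k * z k t) s = distr_fun (\<lambda>t. \<Sum>k<m. c k * y k t) s"
    if "0 \<le> s" for s
    using z y symmetric_space_measurable eq that by (intro distr_fun_sum_disjoint_eq) auto
  ultimately have "N (\<lambda>t. \<Sum>k<m. c k * z k t) = N (\<lambda>t. \<Sum>k<m. c k * y k t)"
    using symmetric_space_equimeasurable by blast
  then show "N (\<lambda>t. \<Sum>k<m. c k * z k t) \<le> C * lp_fin p c m"
    using \<open>upper_est N p C y\<close> by (simp add: upper_est_def)
qed

lemma upper_est_restrict:
  assumes "upper_est N p C y"
    and y: "\<And>k. y k \<in> Xs" and z: "\<And>k. z k \<in> borel_measurable I01" and "0 < a"
    and restrict: "\<And>k t. a * z k t = y k t * indicator B t"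
  shows "upper_est N p (C / a) z"
  unfolding upper_est_def
proof (intro allI)
  fix m c
  let ?y = "\<lambda>t. \<Sum>k<m. c k * y k t" and ?z = "\<lambda>t. \<Sum>k<m. c k * z k t"
  have "a * ?z t = ?y t * indicator B t" for t
  proof -
    have "a * ?z t = (\<Sum>k<m. c k * (a * z k t))"
      by (simp add: sum_distrib_left algebra_simps)
    also have "\<dots> = ?y t * indicator B t"
      by (simp add: restrict sum_distrib_left mult_ac)
    finally show ?thesis .
  qed
  then have "AE t in I01. \<bar>a * ?z t\<bar> \<le> \<bar>?y t\<bar>"
    by (simp add: abs_mult indicator_def)
  moreover have "?y \<in> Xs" using y by (intro symmetric_space_sum symmetric_space_scale)
  moreover have "(\<lambda>t. a * ?z t) \<in> borel_measurable I01" using z by measurable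
  ultimately have az: "(\<lambda>t. a * ?z t) \<in> Xs" "N (\<lambda>t. a * ?z t) \<le> N ?y"
    using symmetric_space_ideal by blast+
  have "N ?z = N (\<lambda>t. (1 / a) * (a * ?z t))" using \<open>0 < a\<close> by simp
  also have "\<dots> = N (\<lambda>t. a * ?z t) / a"
    using symmetric_space_norm_scale[OF az(1), of "1 / a"] \<open>0 < a\<close> by simp
  also have "\<dots> \<le> C * lp_fin p c m / a"
    using az(2) \<open>upper_est N p C y\<close> \<open>0 < a\<close> unfolding upper_est_def
    by (meson divide_right_mono less_imp_le order_trans)
  finally show "N ?z \<le> C / a * lp_fin p c m" by simp
qed

text \<open>The diagonal sequence \<open>Y k = \<Sum>i\<le>k. 2^-(i+1) W i k\<close>: restricted to the union of the
  supports of row \<open>j\<close>, its \<open>k\<close>-th term is \<open>2^-(j+1) W j k\<close> for all \<open>k \<ge> j\<close>, so an upper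
  estimate for a subsequence of \<open>Y\<close> passes to row \<open>j\<close> with only a factor \<open>2^(j+1)\<close> lost.\<close>
lemma diagonal_sequence:
  fixes W :: "nat \<Rightarrow> nat \<Rightarrow> real \<Rightarrow> real"
  assumes W: "\<And>j k. W j k \<in> Xs" "\<And>j k. N (W j k) \<le> 1"
    and supp: "\<And>j k t. W j k t \<noteq> 0 \<Longrightarrow> t \<in> S j k"
    and disj: "\<And>j k j' k'. (j, k) \<noteq> (j', k') \<Longrightarrow> S j k \<inter> S j' k' = {}"
  obtains Y where "\<And>k. Y k \<in> Xs" "\<And>k. N (Y k) \<le> 1" "disjoint_seq Y"
    "\<And>r C j. strict_mono r \<Longrightarrow> upper_est N p C (\<lambda>k. Y (r k))
      \<Longrightarrow> upper_est N p (2^(j+1) * C) (\<lambda>k. W j (r (k + j)))"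
proof
  define a :: "nat \<Rightarrow> real" where "a i = (1/2)^(i+1)" for i
  define Y where "Y k t = (\<Sum>i\<le>k. a i * W i k t)" for k t
  have a_pos: "0 < a i" for i by (simp add: a_def)
  show Y: "Y k \<in> Xs" for k
    unfolding Y_def[abs_def] using W by (intro symmetric_space_sum symmetric_space_scale)
  show "N (Y k) \<le> 1" for k
  proof -
    have "N (Y k) \<le> (\<Sum>i\<le>k. N (\<lambda>t. a i * W i k t))"
      unfolding Y_def[abs_def] using W by (intro symmetric_space_norm_sum_le symmetric_space_scale)
    also have "\<dots> \<le> (\<Sum>i\<le>k. a i)"
    proof (rule sum_mono)
      fix i
      show "N (\<lambda>t. a i * W i k t) \<le> a i"
        using symmetric_space_norm_scale[OF W(1), of "a i"] W(2)[of i k] a_pos[of i]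
        by (simp add: mult_left_le)
    qed
    also have "\<dots> = 1 - (1/2)^(k+1)" by (induction k) (simp_all add: a_def)
    also have "\<dots> \<le> 1" by simp
    finally show ?thesis .
  qed
  show "disjoint_seq Y"
  proof (rule disjoint_seq_disjoint_supports)
    show "t \<in> (\<Union>i. S i k)" if "Y k t \<noteq> 0" for k t
      using that supp by (force simp: Y_def intro: sum.neutral)
    show "(\<Union>i. S i k) \<inter> (\<Union>i. S i l) = {}" if "k \<noteq> l" for k l
      using disj that by blast
  qed
  fix r C j
  assume "strict_mono r" "upper_est N p C (\<lambda>k. Y (r k))"
  then have shifted: "upper_est N p C (\<lambda>k. Y (r (k + j)))"
    using upper_est_shift[of N p C "\<lambda>k. Y (r k)" j] by simp
  have "upper_est N p (C / a j) (\<lambda>k. W j (r (k + j)))"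
  proof (rule upper_est_restrict[OF shifted, where B = "\<Union>k. S j k"])
    show "a j * W j (r (k + j)) t = Y (r (k + j)) t * indicator (\<Union>k. S j k) t" for k t
    proof -
      have "j \<le> r (k + j)" using seq_suble[OF \<open>strict_mono r\<close>, of "k + j"] by linarith
      then show ?thesis unfolding Y_def by (intro sum_restrict_to_band[symmetric] supp disj)
    qed
  qed (use Y W symmetric_space_measurable a_pos in auto)
  then show "upper_est N p (2^(j+1) * C) (\<lambda>k. W j (r (k + j)))"
    by (simp add: a_def power_one_over mult.commute)
qed


lemma has_Dp_row_upper_est:
  assumes "has_Dp Xs N p"
    and x: "\<And>j n. x j n \<in> Xs" "\<And>j n. N (x j n) \<le> 1" "\<And>j. disjoint_seq (x j)"
  obtains j r where "strict_mono r" "upper_est N p ((real j + 1) * 2^(j+1)) (\<lambda>k. x j (r k))"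
proof -
  have x_meas: "\<And>j n. x j n \<in> borel_measurable I01"
    using symmetric_space_measurable[OF x(1)] .
  obtain \<sigma> :: "nat \<Rightarrow> nat \<Rightarrow> nat" and W S where \<sigma>: "\<And>j. strict_mono (\<sigma> j)"
    and W_meas: "\<And>j k. W j k \<in> borel_measurable I01"
    and W_distr: "\<And>j k s. 0 \<le> s \<Longrightarrow> distr_fun (W j k) s = distr_fun (x j (\<sigma> j k)) s"
    and W_supp: "\<And>j k t. W j k t \<noteq> 0 \<Longrightarrow> t \<in> S j k"
    and S_disj: "\<And>j k j' k'. (j, k) \<noteq> (j', k') \<Longrightarrow> S j k \<inter> S j' k' = {}"
    using relocate_disjointly[of x, OF x_meas x(3)] by blast
  have W: "W j k \<in> Xs \<and> N (W j k) = N (x j (\<sigma> j k))" for j k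
    by (rule symmetric_space_equimeasurable[OF x(1) W_meas W_distr])
  obtain Y where Y: "\<And>k. Y k \<in> Xs" "\<And>k. N (Y k) \<le> 1" "disjoint_seq Y"
    and dominates: "\<And>r C j. strict_mono r \<Longrightarrow> upper_est N p C (\<lambda>k. Y (r k))
      \<Longrightarrow> upper_est N p (2^(j+1) * C) (\<lambda>k. W j (r (k + j)))"
    using diagonal_sequence[of W S p] W x(2) W_supp S_disj by metis
  obtain r C where r: "strict_mono r" and "upper_est N p C (\<lambda>k. Y (r k))"
    using \<open>has_Dp Xs N p\<close> Y unfolding has_Dp_def by blast
  define j where "j = nat \<lceil>C\<rceil>"
  define \<rho> where "\<rho> k = r (k + j)" for k
  have \<rho>: "strict_mono \<rho>" using r by (simp add: strict_mono_def \<rho>_def)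
  have "upper_est N p (2^(j+1) * C) (\<lambda>k. W j (\<rho> k))"
    unfolding \<rho>_def by (rule dominates[OF r]) fact
  then have "upper_est N p (2^(j+1) * C) (\<lambda>k. x j (\<sigma> j (\<rho> k)))"
  proof (rule upper_est_equimeasurable)
    show "disjoint_seq (\<lambda>k. W j (\<rho> k))"
      using W_supp S_disj strict_mono_eq[OF \<rho>]
      by (intro disjoint_seq_disjoint_supports[where T = "\<lambda>k. S j (\<rho> k)"]) auto
    show "disjoint_seq (\<lambda>k. x j (\<sigma> j (\<rho> k)))"
      by (rule disjoint_seq_strict_mono[OF disjoint_seq_strict_mono[OF x(3) \<sigma>] \<rho>])
  qed (use W W_distr x_meas in auto)
  then have "upper_est N p ((real j + 1) * 2^(j+1)) (\<lambda>k. x j (\<sigma> j (\<rho> k)))"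
    by (rule upper_est_mono) (simp add: j_def; linarith)
  with strict_mono_o[OF \<sigma> \<rho>] show ?thesis
    by (intro that[of "\<lambda>k. \<sigma> j (\<rho> k)" j]) (simp_all add: o_def)
qed

end

theorem mainTheorem7:
  fixes Xs :: "(real \<Rightarrow> real) set" and N :: "(real \<Rightarrow> real) \<Rightarrow> real" and p :: ereal
  assumes "1 < p" and "symmetric_space Xs N" and "has_Dp Xs N p"
  shows "has_UDp Xs N p"
proof (rule ccontr)
  assume "\<not> has_UDp Xs N p"
  moreover have "(real j + 1) * 2^(j+1) > 0" for j :: nat by simp
  ultimately have "\<exists>x. (\<forall>n. x n \<in> Xs \<and> N (x n) \<le> 1) \<and> disjoint_seq x \<and>
      (\<forall>r. strict_mono r \<longrightarrow> \<not> upper_est N p ((real j + 1) * 2^(j+1)) (\<lambda>k. x (r k)))" for j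
    unfolding has_UDp_def by blast
  then obtain x where x: "\<And>j n. x j n \<in> Xs" "\<And>j n. N (x j n) \<le> 1" "\<And>j. disjoint_seq (x j)"
    and bad: "\<And>j r. strict_mono r
      \<Longrightarrow> \<not> upper_est N p ((real j + 1) * 2^(j+1)) (\<lambda>k. x j (r k))"
    by metis
  obtain j r where "strict_mono r" "upper_est N p ((real j + 1) * 2^(j+1)) (\<lambda>k. x j (r k))"
    using has_Dp_row_upper_est[where x = x, OF \<open>symmetric_space Xs N\<close> \<open>has_Dp Xs N p\<close> x] by blast
  with bad show False by blast
qed

end
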